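(* Let $n\ge 1$ and let $\Sigma_0=(1\,2)(3\,4)\cdots(2n-1\,\,2n)\in S_{2n}$. Let $S_n[S_2]=\{\xi\in S_{2n}:\ \xi\Sigma_0\xi^{-1}=\Sigma_0\}$. Then for every $\sigma\in S_{2n}$ there exist $\xi\in S_n[S_2]$ and $\tau\in S_n$ such that $$\xi^{-1}\,\sigma^{-1}\Sigma_0\sigma\,\xi=(1\ \ 2\tau(1))\,(3\ \ 2\tau(2))\cdots(2n-1\ \ 2\tau(n)),$$ i.e. $\xi^{-1}\sigma^{-1}\Sigma_0\sigma\xi=\prod_{i=1}^n(2i-1,\ 2\tau(i))$.
   Context: $S_m$ denotes the symmetric group on $\{1,\dots,m\}$. The subgroup $S_n[S_2]$ (the wreath product, or hyperoctahedral group, of order $2^n n!$) is the centraliser of the fixed-point-free involution $\Sigma_0$ in $S_{2n}$. In the paper's notation $i^-=2i-1$, $i^+=2i$, so the target permutation is $(1^-\,\tau(1)^+)\cdots(n^-\,\tau(n)^+)$. *)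

theory Defs
  imports "HOL-Combinatorics.Combinatorics"
begin

text \<open>Permutations of {1..m} are functions nat => nat with f permutes {1..m}.
  Composition is function composition (right-to-left).\<close>

definition Sigma0 :: "nat \<Rightarrow> nat \<Rightarrow> nat" where
  "Sigma0 n k = (if k \<in> {1..2*n} then (if odd k then k + 1 else k - 1) else k)"

definition wreath :: "nat \<Rightarrow> (nat \<Rightarrow> nat) set" where
  "wreath n = {\<xi>. \<xi> permutes {1..2*n} \<and> \<xi> \<circ> Sigma0 n \<circ> inv \<xi> = Sigma0 n}"

text \<open>The product of disjoint transpositions (2i-1, 2 tau(i)), i = 1..n,
  for tau a permutation of {1..n}: sends 2i-1 to 2 tau(i) and 2j to 2 tau^{-1}(j) - 1.\<close>
definition pairing_perm :: "nat \<Rightarrow> (nat \<Rightarrow> nat) \<Rightarrow> nat \<Rightarrow> nat" where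
  "pairing_perm n \<tau> k =
     (if k \<in> {1..2*n} then
        (if odd k then 2 * \<tau> ((k + 1) div 2) else 2 * inv \<tau> (k div 2) - 1)
      else k)"

end

theory Submission imports Defs begin

text \<open>The involutions \<open>A = \<Sigma>\<^sub>0\<close> and \<open>B = \<sigma>\<^sup>-\<^sup>1\<Sigma>\<^sub>0\<sigma>\<close> are fixed-point-free,
  so the graph on \<open>{1..2n}\<close> with edges \<open>{x, A x}\<close> and \<open>{x, B x}\<close> is a union of even
  alternating cycles and admits a 2-colouring \<open>c\<close> that both involutions swap. Moving every
  \<open>x\<close> to whichever of \<open>x, \<Sigma>\<^sub>0 x\<close> has parity \<open>c x\<close> gives an involution \<open>\<xi>\<close>
  commuting with \<open>\<Sigma>\<^sub>0\<close>, and conjugating \<open>B\<close> by it yields an involution exchanging odd and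
  even numbers, which is exactly a product \<open>\<Prod>\<^sub>i (2i-1, 2\<tau>(i))\<close>.\<close>

definition fpf_involution_on :: "'a set \<Rightarrow> ('a \<Rightarrow> 'a) \<Rightarrow> bool" where
  "fpf_involution_on S f \<longleftrightarrow> (\<forall>x\<in>S. f x \<in> S \<and> f x \<noteq> x \<and> f (f x) = x)"

lemma fpf_involutionD:
  assumes "fpf_involution_on S f" and "x \<in> S"
  shows "f x \<in> S" "f x \<noteq> x" "f (f x) = x"
  using assms unfolding fpf_involution_on_def by auto

lemma fpf_involution_on_Diff_orbit:
  assumes f: "fpf_involution_on S f" and x: "x \<in> S"
  shows "fpf_involution_on (S - {x, f x}) f"
  unfolding fpf_involution_on_def
proof
  fix z assume z: "z \<in> S - {x, f x}"
  then have "f z \<in> S" "f z \<noteq> z" "f (f z) = z" "f (f x) = x"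
    using fpf_involutionD[OF f] x by auto
  then have "f z \<noteq> x" "f z \<noteq> f x" using z by auto
  then show "f z \<in> S - {x, f x} \<and> f z \<noteq> z \<and> f (f z) = z"
    using \<open>f z \<in> S\<close> \<open>f z \<noteq> z\<close> \<open>f (f z) = z\<close> by blast
qed

lemma fpf_involution_on_splice:
  assumes f: "fpf_involution_on S f" and x: "x \<in> S" and y: "y \<in> S" "y \<noteq> x" "y \<noteq> f x"
  shows "fpf_involution_on (S - {x, y}) (f(f x := f y, f y := f x))"
proof -
  note fx = fpf_involutionD[OF f x] and fy = fpf_involutionD[OF f y(1)]
  have ne: "f x \<noteq> f y" "f y \<noteq> x" using fx(3) fy(3) y(2,3) by metis+
  have "f z \<in> S - {x, y, f x, f y} \<and> f z \<noteq> z \<and> f (f z) = z" if z: "z \<in> S - {x, y, f x, f y}" for z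
  proof -
    have "f z \<in> S" "f z \<noteq> z" "f (f z) = z" using fpf_involutionD[OF f] z by auto
    moreover have "f z \<noteq> x" "f z \<noteq> y" "f z \<noteq> f x" "f z \<noteq> f y"
      using z fx(3) fy(3) \<open>f (f z) = z\<close> by auto
    ultimately show ?thesis by blast
  qed
  then show ?thesis
    using fx fy ne y(3) unfolding fpf_involution_on_def by auto
qed

lemma fpf_involution_on_conj:
  assumes "g permutes S" and "fpf_involution_on S f"
  shows "fpf_involution_on S (inv g \<circ> f \<circ> g)"
  unfolding fpf_involution_on_def
proof
  fix x assume "x \<in> S"
  then have "g x \<in> S" "f (g x) \<in> S" "f (g x) \<noteq> g x" "f (f (g x)) = g x"
    using fpf_involutionD[OF assms(2)] assms(1) by (auto simp: permutes_in_image)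
  then show "(inv g \<circ> f \<circ> g) x \<in> S \<and> (inv g \<circ> f \<circ> g) x \<noteq> x \<and>
      (inv g \<circ> f \<circ> g) ((inv g \<circ> f \<circ> g) x) = x"
    using assms(1) by (auto simp: permutes_in_image permutes_inv permutes_inverses permutes_inv_eq)
qed

lemma two_colouring_extend_shared_orbit:
  fixes c :: "'a \<Rightarrow> bool"
  assumes A: "fpf_involution_on S A" and B: "fpf_involution_on S B"
    and x: "x \<in> S" and shared: "A x = B x"
    and c: "\<forall>z\<in>S - {x, B x}. c (A z) \<noteq> c z \<and> c (B z) \<noteq> c z"
  shows "\<exists>d :: 'a \<Rightarrow> bool. \<forall>z\<in>S. d (A z) \<noteq> d z \<and> d (B z) \<noteq> d z"
proof -
  define y where "y = B x"
  define S' where "S' = S - {x, y}"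
  have y: "y \<noteq> x" "B y = x" "A y = x"
    using fpf_involutionD[OF B x] fpf_involutionD(3)[OF A x] shared unfolding y_def by auto
  have A': "fpf_involution_on S' A" and B': "fpf_involution_on S' B"
    using fpf_involution_on_Diff_orbit[OF A x] fpf_involution_on_Diff_orbit[OF B x] shared
    unfolding S'_def y_def by simp_all
  define d where "d = c(x := True, y := False)"
  have d_S': "d z = c z" if "z \<in> S'" for z using that unfolding d_def S'_def by auto
  have "d (A z) \<noteq> d z \<and> d (B z) \<noteq> d z" if "z \<in> S" for z
  proof (cases "z \<in> S'")
    case True
    then have "A z \<in> S'" "B z \<in> S'"
      using fpf_involutionD(1)[OF A'] fpf_involutionD(1)[OF B'] by auto
    then show ?thesis using c True d_S' unfolding S'_def y_def by metis
  next
    case False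
    then have "z = x \<or> z = y" using that unfolding S'_def by blast
    then show ?thesis using shared y y_def unfolding d_def by auto
  qed
  then show ?thesis by (intro exI[of _ d]) blast
qed

text \<open>Here \<open>A\<close> is re-paired on \<open>S - {x, B x}\<close> so that \<open>A x\<close> and \<open>A (B x)\<close> become partners;
  they then have different colours, which \<open>x\<close> and \<open>B x\<close> copy in reverse.\<close>
lemma two_colouring_extend_splice:
  fixes c :: "'a \<Rightarrow> bool"
  assumes A: "fpf_involution_on S A" and B: "fpf_involution_on S B"
    and x: "x \<in> S" and not_shared: "A x \<noteq> B x"
    and c: "\<forall>z\<in>S - {x, B x}. c ((A(A x := A (B x), A (B x) := A x)) z) \<noteq> c z \<and> c (B z) \<noteq> c z"
  shows "\<exists>d :: 'a \<Rightarrow> bool. \<forall>z\<in>S. d (A z) \<noteq> d z \<and> d (B z) \<noteq> d z"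
proof -
  define y where "y = B x"
  define S' where "S' = S - {x, y}"
  define A' where "A' = A(A x := A y, A y := A x)"
  have y: "y \<in> S" "y \<noteq> x" "B y = x"
    using fpf_involutionD[OF B x] unfolding y_def by auto
  note Ax = fpf_involutionD[OF A x] and Ay = fpf_involutionD[OF A y(1)]
  have A': "fpf_involution_on S' A'"
    unfolding A'_def S'_def
    by (rule fpf_involution_on_splice[OF A x y(1,2)]) (use not_shared y_def in auto)
  have B': "fpf_involution_on S' B"
    unfolding S'_def y_def by (rule fpf_involution_on_Diff_orbit[OF B x])
  have c: "\<forall>z\<in>S'. c (A' z) \<noteq> c z \<and> c (B z) \<noteq> c z"
    using c unfolding A'_def S'_def y_def .
  have "A y \<noteq> x" "A x \<noteq> A y" using not_shared Ax(3) Ay(3) y(2) y_def by metis+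
  then have AS': "A x \<in> S'" "A y \<in> S'" "A x \<noteq> A y"
    using Ax(1,2) Ay(1,2) not_shared y_def unfolding S'_def by auto
  have "A' (A x) = A y" unfolding A'_def using AS'(3) by simp
  then have cA: "c (A y) \<noteq> c (A x)" using c AS'(1) by metis
  define d where "d = c(x := \<not> c (A x), y := c (A x))"
  have d_S': "d z = c z" if "z \<in> S'" for z using that unfolding d_def S'_def by auto
  have dxy: "d x = (\<not> c (A x))" "d y = c (A x)" using y(2) unfolding d_def by auto
  have "d (A z) \<noteq> d z \<and> d (B z) \<noteq> d z" if "z \<in> S" for z
  proof (cases "z \<in> S'")
    case True
    have "d (B z) \<noteq> d z" using c True d_S' fpf_involutionD(1)[OF B' True] by metis
    moreover have "d (A z) \<noteq> d z"
    proof -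
      consider "z = A x" | "z = A y" | "z \<noteq> A x" "z \<noteq> A y" by blast
      then show ?thesis
      proof cases
        case 1
        then show ?thesis using Ax(3) dxy d_S' AS' by simp
      next
        case 2
        then show ?thesis using Ay(3) dxy d_S' AS' cA by simp
      next
        case 3
        then have "A' z = A z" unfolding A'_def by simp
        then show ?thesis using c True d_S' fpf_involutionD(1)[OF A' True] by metis
      qed
    qed
    ultimately show ?thesis by blast
  next
    case False
    then have "z = x \<or> z = y" using that unfolding S'_def by blast
    then show ?thesis using dxy d_S' AS' cA y(3) unfolding y_def by auto
  qed
  then show ?thesis by (intro exI[of _ d]) blast
qed

lemma fpf_involutions_two_colourable:
  assumes "finite S" and "fpf_involution_on S A" and "fpf_involution_on S B"
  shows "\<exists>c :: 'a \<Rightarrow> bool. \<forall>x\<in>S. c (A x) \<noteq> c x \<and> c (B x) \<noteq> c x"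
  using assms
proof (induction "card S" arbitrary: S A rule: less_induct)
  case less
  show ?case
  proof (cases "S = {}")
    case False
    then obtain x where x: "x \<in> S" by blast
    define S' where "S' = S - {x, B x}"
    have card: "card S' < card S"
      using card_Diff2_less[OF less.prems(1) x fpf_involutionD(1)[OF less.prems(3) x]]
      by (simp only: S'_def Diff_insert2[of S x "{B x}"])
    have fin: "finite S'" unfolding S'_def using less.prems(1) by simp
    have B': "fpf_involution_on S' B"
      unfolding S'_def by (rule fpf_involution_on_Diff_orbit[OF less.prems(3) x])
    show ?thesis
    proof (cases "A x = B x")
      case True
      have "fpf_involution_on S' A"
        unfolding S'_def using fpf_involution_on_Diff_orbit[OF less.prems(2) x] True by simp
      then obtain c :: "'a \<Rightarrow> bool" where "\<forall>z\<in>S'. c (A z) \<noteq> c z \<and> c (B z) \<noteq> c z"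
        using less.hyps[OF card fin _ B'] by blast
      then show ?thesis
        using two_colouring_extend_shared_orbit[OF less.prems(2,3) x True] unfolding S'_def by blast
    next
      case False
      let ?A' = "A(A x := A (B x), A (B x) := A x)"
      have "fpf_involution_on S' ?A'"
        unfolding S'_def using fpf_involutionD[OF less.prems(3) x] False
        by (intro fpf_involution_on_splice[OF less.prems(2) x]) auto
      then obtain c :: "'a \<Rightarrow> bool" where "\<forall>z\<in>S'. c (?A' z) \<noteq> c z \<and> c (B z) \<noteq> c z"
        using less.hyps[OF card fin _ B'] by blast
      then show ?thesis
        using two_colouring_extend_splice[OF less.prems(2,3) x False] unfolding S'_def by blast
    qed
  qed simp
qed

lemma involution_permutes:
  assumes "\<And>x. f (f x) = x" and "\<And>x. x \<notin> S \<Longrightarrow> f x = x"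
  shows "f permutes S"
proof -
  have "f x \<in> S" if "x \<in> S" for x
    using assms(1)[of x] assms(2)[of "f x"] that by metis
  then show ?thesis
    by (intro bij_imp_permutes bij_betw_byWitness[where f' = f]) (use assms in auto)
qed

lemma inv_involution:
  assumes "\<And>x. f (f x) = x"
  shows "inv f = f"
  using assms by (intro inv_unique_comp) (auto simp: fun_eq_iff)

lemma fpf_involution_on_Sigma0: "fpf_involution_on {1..2*n} (Sigma0 n)"
  unfolding fpf_involution_on_def Sigma0_def by (auto elim!: oddE) presburger+

lemma odd_Sigma0_iff: "x \<in> {1..2*n} \<Longrightarrow> odd (Sigma0 n x) \<longleftrightarrow> even x"
  unfolding Sigma0_def by auto

lemma Sigma0_outside: "x \<notin> {1..2*n} \<Longrightarrow> Sigma0 n x = x"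
  unfolding Sigma0_def by auto

lemma Sigma0_Sigma0: "Sigma0 n (Sigma0 n x) = x"
  using fpf_involution_on_Sigma0[of n] Sigma0_outside[of x n]
  unfolding fpf_involution_on_def by metis

lemma Sigma0_permutes: "Sigma0 n permutes {1..2*n}"
  by (rule involution_permutes[OF Sigma0_Sigma0 Sigma0_outside])

definition parity_adjust :: "nat \<Rightarrow> (nat \<Rightarrow> bool) \<Rightarrow> nat \<Rightarrow> nat" where
  "parity_adjust n c x = (if x \<in> {1..2*n} \<and> c x \<noteq> odd x then Sigma0 n x else x)"

lemma parity_adjust_outside: "x \<notin> {1..2*n} \<Longrightarrow> parity_adjust n c x = x"
  by (simp add: parity_adjust_def del: atLeastAtMost_iff)

context
  fixes n :: nat and c :: "nat \<Rightarrow> bool"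
  assumes colouring: "\<forall>x\<in>{1..2*n}. c (Sigma0 n x) \<noteq> c x"
begin

lemma odd_parity_adjust: "x \<in> {1..2*n} \<Longrightarrow> odd (parity_adjust n c x) \<longleftrightarrow> c x"
  unfolding parity_adjust_def using odd_Sigma0_iff by auto

lemma Sigma0_partner:
  assumes "x \<in> {1..2*n}"
  shows "Sigma0 n x \<in> {1..2*n}" "c (Sigma0 n x) \<longleftrightarrow> \<not> c x" "odd (Sigma0 n x) \<longleftrightarrow> even x"
  using assms colouring fpf_involutionD(1)[OF fpf_involution_on_Sigma0] odd_Sigma0_iff by auto

lemma parity_adjust_Sigma0: "parity_adjust n c (Sigma0 n x) = Sigma0 n (parity_adjust n c x)"
proof (cases "x \<in> {1..2*n}")
  case True
  then show ?thesis using Sigma0_partner[OF True] by (auto simp: parity_adjust_def Sigma0_Sigma0)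
next
  case False
  then show ?thesis by (simp add: parity_adjust_outside Sigma0_outside)
qed

lemma parity_adjust_parity_adjust: "parity_adjust n c (parity_adjust n c x) = x"
proof (cases "x \<in> {1..2*n}")
  case True
  then show ?thesis using Sigma0_partner[OF True] by (auto simp: parity_adjust_def Sigma0_Sigma0)
next
  case False
  then show ?thesis by (simp add: parity_adjust_outside)
qed

lemma parity_adjust_in_wreath: "parity_adjust n c \<in> wreath n"
proof -
  have perm: "parity_adjust n c permutes {1..2*n}"
    by (rule involution_permutes[OF parity_adjust_parity_adjust parity_adjust_outside])
  have "parity_adjust n c \<circ> Sigma0 n \<circ> parity_adjust n c = Sigma0 n"
    by (simp add: fun_eq_iff parity_adjust_Sigma0 parity_adjust_parity_adjust)
  then show ?thesis
    using perm by (simp add: wreath_def inv_involution[OF parity_adjust_parity_adjust])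
qed

end

lemma parity_swapping_involution_eq_pairing_perm:
  assumes \<rho>: "\<rho> permutes {1..2*n}"
    and \<rho>\<rho>: "\<And>x. x \<in> {1..2*n} \<Longrightarrow> \<rho> (\<rho> x) = x"
    and \<rho>_odd: "\<And>x. x \<in> {1..2*n} \<Longrightarrow> odd (\<rho> x) \<longleftrightarrow> even x"
  shows "\<exists>\<tau>. \<tau> permutes {1..n} \<and> \<rho> = pairing_perm n \<tau>"
proof -
  define \<tau> where "\<tau> i = (if i \<in> {1..n} then \<rho> (2*i - 1) div 2 else i)" for i
  define \<tau>' where "\<tau>' i = (if i \<in> {1..n} then (\<rho> (2*i) + 1) div 2 else i)" for i
  have \<rho>_in: "\<rho> x \<in> {1..2*n}" if "x \<in> {1..2*n}" for x
    using permutes_in_image[OF \<rho>] that by blast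
  have \<tau>: "\<tau> i \<in> {1..n}" "2 * \<tau> i = \<rho> (2*i - 1)" if i: "i \<in> {1..n}" for i
  proof -
    have "2*i - 1 \<in> {1..2*n}" "odd (2*i - 1)" using i by auto
    then have "\<rho> (2*i - 1) \<in> {1..2*n}" "even (\<rho> (2*i - 1))" using \<rho>_in \<rho>_odd by blast+
    then show "\<tau> i \<in> {1..n}" "2 * \<tau> i = \<rho> (2*i - 1)"
      unfolding \<tau>_def using i by (auto elim!: evenE)
  qed
  have \<tau>': "\<tau>' i \<in> {1..n}" "2 * \<tau>' i - 1 = \<rho> (2*i)" if i: "i \<in> {1..n}" for i
  proof -
    have "2*i \<in> {1..2*n}" "even (2*i)" using i by auto
    then have "\<rho> (2*i) \<in> {1..2*n}" "odd (\<rho> (2*i))" using \<rho>_in \<rho>_odd by blast+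
    then show "\<tau>' i \<in> {1..n}" "2 * \<tau>' i - 1 = \<rho> (2*i)"
      unfolding \<tau>'_def using i by (auto elim!: oddE)
  qed
  have \<tau>_\<tau>': "\<tau> (\<tau>' i) = i" if i: "i \<in> {1..n}" for i
  proof -
    have "2*i \<in> {1..2*n}" using i by auto
    then show ?thesis using \<tau>'[OF i] \<rho>\<rho> by (simp add: \<tau>_def)
  qed
  have \<tau>'_\<tau>: "\<tau>' (\<tau> i) = i" if i: "i \<in> {1..n}" for i
  proof -
    have "2*i - 1 \<in> {1..2*n}" using i by auto
    then show ?thesis using \<tau>[OF i] \<rho>\<rho> i by (simp add: \<tau>'_def)
  qed
  have \<tau>_perm: "\<tau> permutes {1..n}"
    by (rule bij_imp_permutes[OF bij_betw_byWitness[where f' = \<tau>']])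
       (use \<tau> \<tau>' \<tau>_\<tau>' \<tau>'_\<tau> in \<open>auto simp: \<tau>_def\<close>)
  have "\<rho> k = pairing_perm n \<tau> k" for k
  proof (cases "k \<in> {1..2*n}")
    case False
    then show ?thesis
      using permutes_not_in[OF \<rho> False] by (simp add: pairing_perm_def del: atLeastAtMost_iff)
  next
    case True
    show ?thesis
    proof (cases "odd k")
      case odd: True
      define i where "i = (k + 1) div 2"
      have "i \<in> {1..n}" "k = 2*i - 1" using True odd unfolding i_def by (auto elim!: oddE)
      then show ?thesis using \<tau> True odd by (simp add: pairing_perm_def i_def[symmetric])
    next
      case even: False
      then obtain i where i: "i \<in> {1..n}" "k = 2*i" "k div 2 = i"
        using True by (auto elim!: evenE)
      have "inv \<tau> i = \<tau>' i" using permutes_inv_eq[OF \<tau>_perm] \<tau>_\<tau>' i(1) by simp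
      then show ?thesis using \<tau>' i True even by (simp add: pairing_perm_def)
    qed
  qed
  then show ?thesis using \<tau>_perm by blast
qed

theorem lemma1:
  fixes n :: nat and \<sigma> :: "nat \<Rightarrow> nat"
  assumes "n \<ge> 1" and "\<sigma> permutes {1..2*n}"
  shows "\<exists>\<xi> \<tau>. \<xi> \<in> wreath n \<and> \<tau> permutes {1..n} \<and>
           inv \<xi> \<circ> inv \<sigma> \<circ> Sigma0 n \<circ> \<sigma> \<circ> \<xi> = pairing_perm n \<tau>"
proof -
  let ?B = "inv \<sigma> \<circ> Sigma0 n \<circ> \<sigma>"
  have B: "fpf_involution_on {1..2*n} ?B"
    by (rule fpf_involution_on_conj[OF assms(2) fpf_involution_on_Sigma0])
  obtain c :: "nat \<Rightarrow> bool" where c: "\<forall>x\<in>{1..2*n}. c (Sigma0 n x) \<noteq> c x \<and> c (?B x) \<noteq> c x"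
    using fpf_involutions_two_colourable[OF finite_atLeastAtMost fpf_involution_on_Sigma0 B] ..
  then have colouring: "\<forall>x\<in>{1..2*n}. c (Sigma0 n x) \<noteq> c x"
    and c_B: "\<forall>x\<in>{1..2*n}. c (?B x) \<noteq> c x" by auto
  define \<xi> where "\<xi> = parity_adjust n c"
  have \<xi>: "\<xi> \<in> wreath n" "inv \<xi> = \<xi>"
    unfolding \<xi>_def using parity_adjust_in_wreath[OF colouring]
      inv_involution[OF parity_adjust_parity_adjust[OF colouring]] by auto
  then have \<xi>_perm: "\<xi> permutes {1..2*n}" by (simp add: wreath_def)
  let ?\<rho> = "inv \<xi> \<circ> ?B \<circ> \<xi>"
  have \<rho>: "fpf_involution_on {1..2*n} ?\<rho>"
    by (rule fpf_involution_on_conj[OF \<xi>_perm B])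
  have \<rho>_odd: "odd (?\<rho> x) \<longleftrightarrow> even x" if x: "x \<in> {1..2*n}" for x
  proof -
    have "\<xi> x \<in> {1..2*n}" "?B (\<xi> x) \<in> {1..2*n}"
      using permutes_in_image[OF \<xi>_perm] fpf_involutionD(1)[OF B] x by auto
    then show ?thesis
      using c_B x \<xi>(2) odd_parity_adjust[OF colouring] parity_adjust_parity_adjust[OF colouring]
      unfolding \<xi>_def by (metis comp_apply)
  qed
  have "?\<rho> permutes {1..2*n}"
    using assms(2) \<xi>_perm by (intro permutes_compose permutes_inv Sigma0_permutes)
  then obtain \<tau> where "\<tau> permutes {1..n}" "?\<rho> = pairing_perm n \<tau>"
    using parity_swapping_involution_eq_pairing_perm[OF _ fpf_involutionD(3)[OF \<rho>] \<rho>_odd] by blast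
  then show ?thesis using \<xi>(1) by (auto simp: o_assoc)
qed

end
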